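(* Let $I=[a,b]\subset\mathbb R$ with $a<b$, and let $f:I\to I$ be a continuous increasing function such that $f(a)=a$, $f(b)=b$ and $f(x)\neq x$ for all $x\in\,]a,b[$. Then ${\rm h_{pol}}(f)=1$.
   Context: $I$ carries the usual metric $d(x,y)=|x-y|$. Polynomial entropy: with $d_n^f(x,y)=\max_{0\le k\le n-1}d(f^k(x),f^k(y))$ and $G_n^f(\varepsilon)$ the minimal number of $d_n^f$-balls of radius $\varepsilon$ covering $I$, ${\rm h_{pol}}(f)=\lim_{\varepsilon\to0}\limsup_{n\to\infty}\frac{\log G_n^f(\varepsilon)}{\log n}$. *)

theory Defs
  imports "HOL-Analysis.Analysis" "HOL-Library.Extended_Real"
begin

definition dyn_dist :: "(real \<Rightarrow> real) \<Rightarrow> nat \<Rightarrow> real \<Rightarrow> real \<Rightarrow> real" where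
  "dyn_dist f n x y = (if n = 0 then 0 else Max ((\<lambda>k. \<bar>(f ^^ k) x - (f ^^ k) y\<bar>) ` {..<n}))"

definition dyn_ball :: "real set \<Rightarrow> (real \<Rightarrow> real) \<Rightarrow> nat \<Rightarrow> real \<Rightarrow> real \<Rightarrow> real set" where
  "dyn_ball I f n c e = {y \<in> I. dyn_dist f n c y < e}"

definition cover_num :: "real set \<Rightarrow> (real \<Rightarrow> real) \<Rightarrow> nat \<Rightarrow> real \<Rightarrow> nat" where
  "cover_num I f n e = Inf {card C | C. finite C \<and> C \<subseteq> I \<and> I \<subseteq> (\<Union>c\<in>C. dyn_ball I f n c e)}"

definition pol_growth :: "real set \<Rightarrow> (real \<Rightarrow> real) \<Rightarrow> real \<Rightarrow> ereal" where
  "pol_growth I f e = limsup (\<lambda>n. ereal (ln (real (cover_num I f n e)) / ln (real n)))"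

text \<open>Polynomial entropy: the limit as e -> 0+ of pol_growth (it exists by monotonicity).\<close>
definition hpol :: "real set \<Rightarrow> (real \<Rightarrow> real) \<Rightarrow> ereal" where
  "hpol I f = Lim (at_right 0) (pol_growth I f)"

end

theory Submission
  imports Defs "HOL-Real_Asymp.Real_Asymp"
begin

text \<open>Conjugating by \<open>x \<mapsto> a + b - x\<close> we may assume \<open>x < f x\<close> on \<open>]a, b[\<close>, so every orbit
  increases from \<open>a\<close> towards \<open>b\<close>. Away from the endpoints the displacement \<open>f x - x\<close> is bounded
  below, so an orbit crosses any compact part of \<open>]a, b[\<close> in a bounded number of steps. Hence two
  points are \<open>d\<^sub>n\<close>-close as soon as their orbits enter \<open>[p, b]\<close> at the same time at nearby
  positions, which gives \<open>G\<^sub>n(\<epsilon>) = O(n)\<close>. Conversely, the points whose orbits pass a fixed level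
  at the times \<open>0, s, 2s, \<dots>\<close> are \<open>2\<epsilon>\<close>-separated, so \<open>G\<^sub>n(\<epsilon>) \<ge> n / s\<close> for small \<open>\<epsilon>\<close>.
  Thus \<open>log G\<^sub>n(\<epsilon>) / log n \<rightarrow> 1\<close>.\<close>

section \<open>Covers by dynamical balls\<close>

lemma dyn_dist_less_iff:
  assumes "0 < e"
  shows "dyn_dist f n x y < e \<longleftrightarrow> (\<forall>k<n. \<bar>(f ^^ k) x - (f ^^ k) y\<bar> < e)"
proof (cases "n = 0")
  case False
  then have "dyn_dist f n x y = Max ((\<lambda>k. \<bar>(f ^^ k) x - (f ^^ k) y\<bar>) ` {..<n})"
    by (simp add: dyn_dist_def)
  also have "\<dots> < e \<longleftrightarrow> (\<forall>k<n. \<bar>(f ^^ k) x - (f ^^ k) y\<bar> < e)"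
    using False by (subst Max_less_iff) auto
  finally show ?thesis .
qed (use assms in \<open>simp add: dyn_dist_def\<close>)

definition dyn_cover :: "real set \<Rightarrow> (real \<Rightarrow> real) \<Rightarrow> nat \<Rightarrow> real \<Rightarrow> real set \<Rightarrow> bool" where
  "dyn_cover I f n e C \<longleftrightarrow> finite C \<and> C \<subseteq> I \<and> I \<subseteq> (\<Union>c\<in>C. dyn_ball I f n c e)"

lemma cover_num_eq_Inf: "cover_num I f n e = Inf {card C | C. dyn_cover I f n e C}"
  by (simp add: cover_num_def dyn_cover_def)

lemma cover_num_le_card: "dyn_cover I f n e C \<Longrightarrow> cover_num I f n e \<le> card C"
  unfolding cover_num_eq_Inf by (rule cInf_lower) auto

lemma cover_num_attained:
  assumes "dyn_cover I f n e C0"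
  obtains C where "dyn_cover I f n e C" "card C = cover_num I f n e"
proof -
  have "cover_num I f n e \<in> {card C | C. dyn_cover I f n e C}"
    unfolding cover_num_eq_Inf by (rule Inf_nat_def1) (use assms in blast)
  then show thesis using that by force
qed

lemma dyn_cover_of_labelling:
  fixes label :: "real \<Rightarrow> 'l"
  assumes "0 < e" "finite L" "label ` I \<subseteq> L"
    and close: "\<And>x y k. x \<in> I \<Longrightarrow> y \<in> I \<Longrightarrow> label x = label y \<Longrightarrow> k < n
      \<Longrightarrow> \<bar>(f ^^ k) x - (f ^^ k) y\<bar> < e"
  shows "\<exists>C. dyn_cover I f n e C \<and> card C \<le> card L"
proof -
  define rep where "rep l = (SOME x. x \<in> I \<and> label x = l)" for l
  have rep: "rep (label x) \<in> I \<and> label (rep (label x)) = label x" if "x \<in> I" for x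
    unfolding rep_def by (rule someI[of _ x]) (use that in simp)
  have fin: "finite (label ` I)"
    using assms(2,3) finite_subset by blast
  have "x \<in> dyn_ball I f n (rep (label x)) e" if "x \<in> I" for x
    using rep[OF that] close[of "rep (label x)" x] that
    by (simp add: dyn_ball_def dyn_dist_less_iff[OF \<open>0 < e\<close>])
  then have "dyn_cover I f n e (rep ` label ` I)"
    using fin rep by (fastforce simp: dyn_cover_def)
  moreover have "card (rep ` label ` I) \<le> card L"
    using card_image_le[OF fin, of rep] card_mono[OF assms(2,3)] by linarith
  ultimately show ?thesis by blast
qed

lemma card_le_cover_num_of_separated:
  fixes x :: "'i \<Rightarrow> real"
  assumes "0 < e" "dyn_cover I f n e C0" "x ` J \<subseteq> I"
    and sep: "\<And>i j. i \<in> J \<Longrightarrow> j \<in> J \<Longrightarrow> i \<noteq> j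
      \<Longrightarrow> \<exists>k<n. 2 * e \<le> \<bar>(f ^^ k) (x i) - (f ^^ k) (x j)\<bar>"
  shows "card J \<le> cover_num I f n e"
proof -
  obtain C where C: "dyn_cover I f n e C" "card C = cover_num I f n e"
    using cover_num_attained[OF assms(2)] .
  have "\<forall>i\<in>J. \<exists>c\<in>C. x i \<in> dyn_ball I f n c e"
    using C(1) assms(3) unfolding dyn_cover_def by blast
  then obtain centre where centre: "\<And>i. i \<in> J \<Longrightarrow> centre i \<in> C \<and> x i \<in> dyn_ball I f n (centre i) e"
    by metis
  have near: "\<bar>(f ^^ k) (centre i) - (f ^^ k) (x i)\<bar> < e" if "i \<in> J" "k < n" for i k
    using centre[OF that(1)] that(2) by (simp add: dyn_ball_def dyn_dist_less_iff[OF \<open>0 < e\<close>])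
  have "inj_on centre J"
  proof (rule inj_onI, rule ccontr)
    fix i j assume ij: "i \<in> J" "j \<in> J" "centre i = centre j" "i \<noteq> j"
    then obtain k where "k < n" "2 * e \<le> \<bar>(f ^^ k) (x i) - (f ^^ k) (x j)\<bar>"
      using sep by blast
    with near[OF ij(1)] near[OF ij(2)] ij(3) show False by force
  qed
  then have "card J \<le> card C"
    by (rule card_inj_on_le) (use centre C(1) in \<open>auto simp: dyn_cover_def\<close>)
  with C(2) show ?thesis by simp
qed

lemma ln_ratio_tendsto_one_of_linear_bounds:
  fixes G :: "nat \<Rightarrow> real"
  assumes "0 < c" and bounds: "eventually (\<lambda>n. c * real n \<le> G n \<and> G n \<le> C * real n) sequentially"
  shows "((\<lambda>n. ln (G n) / ln (real n)) \<longlongrightarrow> 1) sequentially"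
proof (rule tendsto_sandwich)
  have ev: "eventually (\<lambda>n. 2 \<le> n \<and> c * real n \<le> G n \<and> G n \<le> C * real n) sequentially"
    using bounds eventually_ge_at_top[of 2] by eventually_elim simp
  then show "eventually (\<lambda>n. (ln c + ln (real n)) / ln (real n) \<le> ln (G n) / ln (real n)) sequentially"
  proof eventually_elim
    case (elim n)
    have "0 < c * real n" using elim \<open>0 < c\<close> by simp
    then have "ln (c * real n) \<le> ln (G n)"
      using elim by (subst ln_le_cancel_iff) auto
    then show ?case
      using elim \<open>0 < c\<close> by (intro divide_right_mono) (auto simp: ln_mult)
  qed
  from ev show "eventually (\<lambda>n. ln (G n) / ln (real n) \<le> (ln C + ln (real n)) / ln (real n)) sequentially"
  proof eventually_elim
    case (elim n)
    have "0 < c * real n" using elim \<open>0 < c\<close> by simp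
    then have "0 < G n" using elim by linarith
    then have "0 < C" using elim by (smt (verit) mult_nonpos_nonneg of_nat_0_le_iff)
    have "ln (G n) \<le> ln (C * real n)"
      using elim \<open>0 < G n\<close> by (subst ln_le_cancel_iff) auto
    then show ?case
      using elim \<open>0 < C\<close> by (intro divide_right_mono) (auto simp: ln_mult)
  qed
  show "((\<lambda>n. (ln c + ln (real n)) / ln (real n)) \<longlongrightarrow> 1) sequentially" by real_asymp
  show "((\<lambda>n. (ln C + ln (real n)) / ln (real n)) \<longlongrightarrow> 1) sequentially" by real_asymp
qed

lemma pol_growth_eq_one_of_linear_bounds:
  assumes "0 < c"
    and "eventually (\<lambda>n. c * real n \<le> real (cover_num I f n e) \<and> real (cover_num I f n e) \<le> C * real n) sequentially"
  shows "pol_growth I f e = 1"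
proof -
  have "((\<lambda>n. ereal (ln (real (cover_num I f n e)) / ln (real n))) \<longlongrightarrow> ereal 1) sequentially"
    using ln_ratio_tendsto_one_of_linear_bounds[OF assms] by (simp add: lim_ereal)
  then show ?thesis
    unfolding pol_growth_def one_ereal_def by (intro lim_imp_Limsup) simp_all
qed

section \<open>Iterates and reflection\<close>

lemma funpow_in: "f ` S \<subseteq> S \<Longrightarrow> x \<in> S \<Longrightarrow> (f ^^ k) x \<in> S"
  by (induction k) auto

lemma funpow_fixpoint: "f x = x \<Longrightarrow> (f ^^ k) x = x"
  by (induction k) auto

lemma continuous_on_funpow:
  assumes "f ` S \<subseteq> S" "continuous_on S f"
  shows "continuous_on S (f ^^ k)"
proof (induction k)
  case (Suc k)
  have "continuous_on S (\<lambda>x. f ((f ^^ k) x))"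
    by (rule continuous_on_compose2[OF assms(2) Suc]) (use assms(1) funpow_in in auto)
  then show ?case by (simp add: comp_def)
qed (simp add: continuous_on_id)

lemma uniformly_continuous_funpows:
  fixes f :: "'a::metric_space \<Rightarrow> 'a"
  assumes "compact S" "f ` S \<subseteq> S" "continuous_on S f" "0 < e"
  shows "\<exists>d>0. \<forall>j\<le>T. \<forall>x\<in>S. \<forall>y\<in>S. dist x y < d \<longrightarrow> dist ((f ^^ j) x) ((f ^^ j) y) < e"
proof (induction T)
  case 0
  then show ?case using assms(4) by auto
next
  case (Suc T)
  then obtain d where d: "d > 0"
    "\<forall>j\<le>T. \<forall>x\<in>S. \<forall>y\<in>S. dist x y < d \<longrightarrow> dist ((f ^^ j) x) ((f ^^ j) y) < e"
    by blast
  have "uniformly_continuous_on S (f ^^ Suc T)"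
    by (rule compact_uniformly_continuous[OF continuous_on_funpow[OF assms(2,3)] assms(1)])
  then obtain d' where d': "d' > 0"
    "\<forall>x\<in>S. \<forall>y\<in>S. dist x y < d' \<longrightarrow> dist ((f ^^ Suc T) x) ((f ^^ Suc T) y) < e"
    unfolding uniformly_continuous_on_def using assms(4) by metis
  have "dist ((f ^^ j) x) ((f ^^ j) y) < e"
    if "j \<le> Suc T" "x \<in> S" "y \<in> S" "dist x y < min d d'" for j x y
    using d(2) d'(2) that by (cases "j = Suc T") auto
  then show ?case
    using d(1) d'(1) by (intro exI[of _ "min d d'"]) auto
qed

lemma funpow_reflect:
  fixes f :: "real \<Rightarrow> real"
  shows "((\<lambda>x. c - f (c - x)) ^^ k) x = c - (f ^^ k) (c - x)"
  by (induction k arbitrary: x) auto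

lemma dyn_dist_reflect:
  fixes f :: "real \<Rightarrow> real"
  shows "dyn_dist (\<lambda>x. c - f (c - x)) n x y = dyn_dist f n (c - x) (c - y)"
  by (simp add: dyn_dist_def funpow_reflect abs_minus_commute)

lemma dyn_cover_reflect:
  assumes "\<And>x. x \<in> I \<Longrightarrow> c - x \<in> I" "dyn_cover I f n e C"
  shows "dyn_cover I (\<lambda>x. c - f (c - x)) n e ((\<lambda>x. c - x) ` C)"
  unfolding dyn_cover_def
proof (intro conjI subsetI)
  show "finite ((\<lambda>x. c - x) ` C)" "\<And>y. y \<in> (\<lambda>x. c - x) ` C \<Longrightarrow> y \<in> I"
    using assms by (auto simp: dyn_cover_def)
  fix y assume "y \<in> I"
  then obtain x where "x \<in> C" "c - y \<in> dyn_ball I f n x e"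
    using assms unfolding dyn_cover_def by blast
  then show "y \<in> (\<Union>z\<in>(\<lambda>x. c - x) ` C. dyn_ball I (\<lambda>x. c - f (c - x)) n z e)"
    using \<open>y \<in> I\<close> by (auto simp: dyn_ball_def dyn_dist_reflect abs_minus_commute)
qed

lemma pol_growth_reflect:
  assumes "\<And>x. x \<in> I \<Longrightarrow> c - x \<in> I"
  shows "pol_growth I (\<lambda>x. c - f (c - x)) = pol_growth I f"
proof -
  have covers: "{card C | C. dyn_cover I g n e C} \<subseteq> {card C | C. dyn_cover I (\<lambda>x. c - g (c - x)) n e C}"
    for g n e
  proof clarify
    fix C assume "dyn_cover I g n e C"
    moreover have "card ((\<lambda>x. c - x) ` C) = card C"
      by (rule card_image) (simp add: inj_on_def)
    ultimately show "\<exists>C'. card C = card C' \<and> dyn_cover I (\<lambda>x. c - g (c - x)) n e C'"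
      using dyn_cover_reflect[OF assms] by metis
  qed
  have "cover_num I (\<lambda>x. c - f (c - x)) n e = cover_num I f n e" for n e
  proof -
    have "{card C | C. dyn_cover I (\<lambda>x. c - f (c - x)) n e C} = {card C | C. dyn_cover I f n e C}"
      using covers[of f n e] covers[of "\<lambda>x. c - f (c - x)" n e] by simp
    then show ?thesis unfolding cover_num_eq_Inf by simp
  qed
  then show ?thesis
    unfolding pol_growth_def by (simp only:)
qed

section \<open>Interval maps above the diagonal\<close>

definition entry_time :: "(real \<Rightarrow> real) \<Rightarrow> real \<Rightarrow> real \<Rightarrow> nat" where
  "entry_time f p x = (LEAST t. p \<le> (f ^^ t) x)"

lemma entry_time_le: "p \<le> (f ^^ k) x \<Longrightarrow> entry_time f p x \<le> k"
  unfolding entry_time_def by (rule Least_le)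

lemma le_funpow_entry_time: "p \<le> (f ^^ k) x \<Longrightarrow> p \<le> (f ^^ entry_time f p x) x"
  unfolding entry_time_def by (rule LeastI)

lemma funpow_less_before_entry_time: "k < entry_time f p x \<Longrightarrow> (f ^^ k) x < p"
  unfolding entry_time_def by (drule not_less_Least) simp

definition entry_label :: "(real \<Rightarrow> real) \<Rightarrow> real \<Rightarrow> real \<Rightarrow> nat \<Rightarrow> real \<Rightarrow> (nat \<times> nat) option" where
  "entry_label f p d n x = (if \<forall>k<n. (f ^^ k) x < p then None
    else Some (entry_time f p x, nat \<lfloor>((f ^^ entry_time f p x) x - p) / d\<rfloor>))"

lemma nat_floor_div_less:
  fixes d z b p :: real
  assumes "0 < d" "z \<le> b"
  shows "nat \<lfloor>(z - p) / d\<rfloor> < nat \<lceil>(b - p) / d\<rceil> + 1"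
proof -
  have "(z - p) / d \<le> (b - p) / d"
    using assms by (simp add: divide_right_mono)
  then have "\<lfloor>(z - p) / d\<rfloor> \<le> \<lceil>(b - p) / d\<rceil>"
    by (meson floor_le_ceiling floor_mono order_trans)
  then show ?thesis
    by (simp add: nat_mono less_Suc_eq_le)
qed

lemma abs_diff_less_of_nat_floor_div_eq:
  fixes d z w p :: real
  assumes "0 < d" "p \<le> z" "p \<le> w" "nat \<lfloor>(z - p) / d\<rfloor> = nat \<lfloor>(w - p) / d\<rfloor>"
  shows "\<bar>z - w\<bar> < d"
proof -
  have "\<lfloor>(z - p) / d\<rfloor> = \<lfloor>(w - p) / d\<rfloor>"
    using assms by (simp add: eq_nat_nat_iff)
  then have "\<bar>(z - p) / d - (w - p) / d\<bar> < 1"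
    using of_int_floor_le[of "(z - p) / d"] of_int_floor_le[of "(w - p) / d"]
      real_of_int_floor_add_one_gt[of "(z - p) / d"] real_of_int_floor_add_one_gt[of "(w - p) / d"]
    by (simp add: abs_less_iff) linarith
  also have "(z - p) / d - (w - p) / d = (z - w) / d"
    by (simp add: diff_divide_distrib)
  finally show ?thesis
    using assms(1) by (simp add: abs_divide)
qed

lemma mult_less_of_le_div_pred:
  fixes n r s :: nat
  assumes "0 < n" "r \<le> (n - 1) div s"
  shows "s * r < n"
proof -
  have "s * r \<le> s * ((n - 1) div s)"
    using assms(2) by simp
  also have "\<dots> \<le> n - 1"
    by (rule times_div_less_eq_dividend)
  finally show ?thesis
    using assms(1) by linarith
qed

lemma le_mult_Suc_div_pred:
  fixes n s :: nat
  assumes "0 < s" "0 < n"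
  shows "n \<le> s * ((n - 1) div s + 1)"
proof -
  have "(n - 1) div s * s + (n - 1) mod s = n - 1"
    by (rule div_mult_mod_eq)
  moreover have "(n - 1) mod s < s"
    using assms(1) by simp
  moreover have "s * ((n - 1) div s + 1) = (n - 1) div s * s + s"
    by (simp add: algebra_simps)
  ultimately show ?thesis
    using assms(2) by linarith
qed

locale upward_map =
  fixes a b :: real and f :: "real \<Rightarrow> real"
  assumes a_less_b: "a < b" and maps_into: "f ` {a..b} \<subseteq> {a..b}"
    and continuous: "continuous_on {a..b} f" and fix_a: "f a = a" and fix_b: "f b = b"
    and above_diagonal: "\<And>x. x \<in> {a<..<b} \<Longrightarrow> x < f x"
begin

lemma funpow_in_interval: "x \<in> {a..b} \<Longrightarrow> (f ^^ k) x \<in> {a..b}"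
  using funpow_in[OF maps_into] .

lemma self_le_image: "x \<in> {a..b} \<Longrightarrow> x \<le> f x"
  using above_diagonal[of x] fix_a fix_b by (cases "x = a \<or> x = b") auto

lemma orbit_mono:
  assumes "x \<in> {a..b}" "i \<le> j"
  shows "(f ^^ i) x \<le> (f ^^ j) x"
  using assms(2)
proof (induction j rule: dec_induct)
  case (step j)
  then show ?case
    using self_le_image[OF funpow_in_interval[OF assms(1), of j]] by auto
qed simp

lemma displacement_bounded_below:
  assumes "a < p" "p \<le> q" "q < b"
  obtains m where "0 < m" "\<And>w. w \<in> {p..q} \<Longrightarrow> m \<le> f w - w"
proof -
  have "continuous_on {p..q} (\<lambda>w. f w - w)"
    by (intro continuous_intros continuous_on_subset[OF continuous]) (use assms in auto)
  then obtain w0 where w0: "w0 \<in> {p..q}" "\<And>w. w \<in> {p..q} \<Longrightarrow> f w0 - w0 \<le> f w - w"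
    using continuous_attains_inf[of "{p..q}" "\<lambda>w. f w - w"] assms by auto
  moreover have "w0 < f w0"
    using above_diagonal[of w0] w0(1) assms by auto
  ultimately show thesis
    using that[of "f w0 - w0"] by auto
qed

lemma crossing_time:
  assumes "a < p" "p \<le> q" "q < b"
  obtains T where "\<And>z j. z \<in> {p..b} \<Longrightarrow> T \<le> j \<Longrightarrow> q < (f ^^ j) z"
proof -
  obtain m where m: "0 < m" "\<And>w. w \<in> {p..q} \<Longrightarrow> m \<le> f w - w"
    using displacement_bounded_below[OF assms] by blast
  obtain T :: nat where T: "q - p < real T * m"
    using ex_less_of_nat_mult[OF m(1)] by blast
  have climb: "q < (f ^^ j) z \<or> p + real j * m \<le> (f ^^ j) z" if z: "z \<in> {p..b}" for z j
  proof (induction j)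
    case 0
    then show ?case using z by simp
  next
    case (Suc j)
    let ?w = "(f ^^ j) z"
    have w: "?w \<in> {a..b}"
      using z assms by (intro funpow_in_interval) auto
    show ?case
    proof (cases "q < ?w")
      case True
      with self_le_image[OF w] show ?thesis by simp
    next
      case False
      with Suc have low: "p + real j * m \<le> ?w" by auto
      moreover have "0 \<le> real j * m" using m(1) by simp
      ultimately have "m \<le> f ?w - ?w" using False m(2)[of ?w] by auto
      with low show ?thesis by (simp add: algebra_simps)
    qed
  qed
  show thesis
  proof (rule that)
    fix z j assume "z \<in> {p..b}" "T \<le> j"
    moreover have "real T * m \<le> real j * m"
      using \<open>T \<le> j\<close> m(1) by (simp add: mult_right_mono)
    ultimately show "q < (f ^^ j) z"
      using climb[of z j] T by linarith
  qed
qed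

text \<open>Orbits spend a bounded time in the middle of the interval and then stay near \<open>b\<close>,
  so closeness on \<open>[p, b]\<close> persists for all time.\<close>

lemma orbits_stay_close:
  assumes "0 < e"
  obtains p d where "p < a + e" "0 < d"
    "\<And>z w j. z \<in> {p..b} \<Longrightarrow> w \<in> {p..b} \<Longrightarrow> \<bar>z - w\<bar> < d \<Longrightarrow> \<bar>(f ^^ j) z - (f ^^ j) w\<bar> < e"
proof -
  define r where "r = min e (b - a) / 3"
  have r: "0 < r" "r < e" "3 * r \<le> b - a"
    using assms a_less_b by (auto simp: r_def min_def)
  define p q where "p = a + r" and "q = b - r"
  have pq: "a < p" "p \<le> q" "q < b" "p < a + e" "b - q < e"
    using r by (auto simp: p_def q_def)
  obtain T where T: "\<And>z j. z \<in> {p..b} \<Longrightarrow> T \<le> j \<Longrightarrow> q < (f ^^ j) z"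
    using crossing_time[OF pq(1-3)] by blast
  obtain d where d: "0 < d"
    "\<forall>j\<le>T. \<forall>x\<in>{a..b}. \<forall>y\<in>{a..b}. dist x y < d \<longrightarrow> dist ((f ^^ j) x) ((f ^^ j) y) < e"
    using uniformly_continuous_funpows[OF compact_Icc maps_into continuous assms] by blast
  show thesis
  proof (rule that[OF pq(4) d(1)])
    fix z w j assume zw: "z \<in> {p..b}" "w \<in> {p..b}" "\<bar>z - w\<bar> < d"
    show "\<bar>(f ^^ j) z - (f ^^ j) w\<bar> < e"
    proof (cases "j \<le> T")
      case True
      then show ?thesis
        using d(2)[rule_format, of j z w] zw pq by (auto simp: dist_real_def)
    next
      case False
      then have "q < (f ^^ j) z" "q < (f ^^ j) w"
        using T zw by auto
      moreover have "(f ^^ j) z \<le> b" "(f ^^ j) w \<le> b"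
        using funpow_in_interval[of z j] funpow_in_interval[of w j] zw pq by auto
      ultimately show ?thesis
        using pq by (auto simp: abs_less_iff)
    qed
  qed
qed

lemma orbits_close_below:
  assumes "p < a + e" "x \<in> {a..b}" "y \<in> {a..b}" "(f ^^ k) x < p" "(f ^^ k) y < p"
  shows "\<bar>(f ^^ k) x - (f ^^ k) y\<bar> < e"
  using assms funpow_in_interval[of x k] funpow_in_interval[of y k] by (auto simp: abs_less_iff)

lemma orbits_close_of_common_entry:
  assumes "p < a + e"
    and stable: "\<And>z w j. z \<in> {p..b} \<Longrightarrow> w \<in> {p..b} \<Longrightarrow> \<bar>z - w\<bar> < d
      \<Longrightarrow> \<bar>(f ^^ j) z - (f ^^ j) w\<bar> < e"
    and xy: "x \<in> {a..b}" "y \<in> {a..b}" and same_entry: "entry_time f p y = entry_time f p x"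
    and entered: "p \<le> (f ^^ entry_time f p x) x" "p \<le> (f ^^ entry_time f p x) y"
    and near: "\<bar>(f ^^ entry_time f p x) x - (f ^^ entry_time f p x) y\<bar> < d"
  shows "\<bar>(f ^^ k) x - (f ^^ k) y\<bar> < e"
proof (cases "k < entry_time f p x")
  case True
  then show ?thesis
    using orbits_close_below[OF assms(1) xy] same_entry
      funpow_less_before_entry_time[of k f p x] funpow_less_before_entry_time[of k f p y] by simp
next
  case False
  define t where "t = entry_time f p x"
  have shift: "(f ^^ k) z = (f ^^ (k - t)) ((f ^^ t) z)" for z
    using False funpow_add[of "k - t" t f] unfolding t_def by simp
  have "\<bar>(f ^^ (k - t)) ((f ^^ t) x) - (f ^^ (k - t)) ((f ^^ t) y)\<bar> < e"
    using entered near funpow_in_interval[OF xy(1)] funpow_in_interval[OF xy(2)]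
    unfolding t_def by (intro stable) auto
  then show ?thesis
    by (simp only: shift)
qed

lemma entry_label_in:
  assumes "0 < d" "x \<in> {a..b}"
  shows "entry_label f p d n x \<in> insert None (Some ` ({..<n} \<times> {..<nat \<lceil>(b - p) / d\<rceil> + 1}))"
proof (cases "\<forall>k<n. (f ^^ k) x < p")
  case False
  then obtain k where "k < n" "p \<le> (f ^^ k) x"
    by (auto simp: not_less)
  then have "entry_time f p x < n"
    using entry_time_le order.strict_trans1 by blast
  moreover have "nat \<lfloor>((f ^^ entry_time f p x) x - p) / d\<rfloor> < nat \<lceil>(b - p) / d\<rceil> + 1"
    using funpow_in_interval[OF assms(2)] assms(1) by (intro nat_floor_div_less) auto
  ultimately show ?thesis
    using False by (simp add: entry_label_def)
qed (simp add: entry_label_def)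

lemma orbits_close_of_same_entry_label:
  assumes "p < a + e" "0 < d"
    and stable: "\<And>z w j. z \<in> {p..b} \<Longrightarrow> w \<in> {p..b} \<Longrightarrow> \<bar>z - w\<bar> < d
      \<Longrightarrow> \<bar>(f ^^ j) z - (f ^^ j) w\<bar> < e"
    and xy: "x \<in> {a..b}" "y \<in> {a..b}" "entry_label f p d n x = entry_label f p d n y"
    and "k < n"
  shows "\<bar>(f ^^ k) x - (f ^^ k) y\<bar> < e"
proof (cases "\<forall>k<n. (f ^^ k) x < p")
  case True
  then have "\<forall>k<n. (f ^^ k) y < p"
    using xy(3) by (simp add: entry_label_def split: if_split_asm)
  then show ?thesis
    using orbits_close_below[OF assms(1) xy(1,2)] \<open>k < n\<close> True by blast
next
  case False
  then have not_below_y: "\<not> (\<forall>k<n. (f ^^ k) y < p)"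
    using xy(3) by (simp add: entry_label_def split: if_split_asm)
  let ?t = "entry_time f p"
  have "entry_label f p d n x = Some (?t x, nat \<lfloor>((f ^^ ?t x) x - p) / d\<rfloor>)"
    unfolding entry_label_def by (rule if_not_P[OF False])
  moreover have "entry_label f p d n y = Some (?t y, nat \<lfloor>((f ^^ ?t y) y - p) / d\<rfloor>)"
    unfolding entry_label_def by (rule if_not_P[OF not_below_y])
  ultimately have same_entry: "?t y = ?t x"
    and same_cell: "nat \<lfloor>((f ^^ ?t x) x - p) / d\<rfloor> = nat \<lfloor>((f ^^ ?t x) y - p) / d\<rfloor>"
    using xy(3) by (metis option.inject prod.inject)+
  have entered: "p \<le> (f ^^ ?t x) x" "p \<le> (f ^^ ?t x) y"
    using False not_below_y le_funpow_entry_time same_entry by (metis not_less)+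
  have "\<bar>(f ^^ ?t x) x - (f ^^ ?t x) y\<bar> < d"
    using same_cell by (rule abs_diff_less_of_nat_floor_div_eq[OF assms(2) entered])
  then show ?thesis
    using orbits_close_of_common_entry[OF assms(1) stable xy(1,2) same_entry entered] by blast
qed

lemma dyn_cover_linear_size:
  assumes "0 < e"
  obtains N :: nat where "\<And>n. \<exists>C. dyn_cover {a..b} f n e C \<and> card C \<le> N * n + 1"
proof -
  obtain p d where p: "p < a + e" and d: "0 < d"
    and stable: "\<And>z w j. z \<in> {p..b} \<Longrightarrow> w \<in> {p..b} \<Longrightarrow> \<bar>z - w\<bar> < d
      \<Longrightarrow> \<bar>(f ^^ j) z - (f ^^ j) w\<bar> < e"
    using orbits_stay_close[OF assms] by blast
  define N where "N = nat \<lceil>(b - p) / d\<rceil> + 1"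
  have "\<exists>C. dyn_cover {a..b} f n e C \<and> card C \<le> N * n + 1" for n
  proof -
    define L where "L = insert None (Some ` ({..<n} \<times> {..<N}))"
    have "finite L" and card_L: "card L = N * n + 1"
      by (simp_all add: L_def card_image card_cartesian_product)
    have "entry_label f p d n ` {a..b} \<subseteq> L"
      unfolding L_def N_def by (rule image_subsetI) (rule entry_label_in[OF d])
    then show ?thesis
      unfolding card_L[symmetric]
      by (rule dyn_cover_of_labelling[OF assms \<open>finite L\<close> _ orbits_close_of_same_entry_label[OF p d stable]])
  qed
  then show thesis
    using that by blast
qed

lemma level_preimage:
  assumes "c \<in> {a..b}"
  shows "\<exists>x. x \<in> {a..b} \<and> (f ^^ k) x = c"
proof -
  have "\<exists>x. a \<le> x \<and> x \<le> b \<and> (f ^^ k) x = c"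
    using assms a_less_b funpow_fixpoint[of f a k, OF fix_a] funpow_fixpoint[of f b k, OF fix_b]
    by (intro IVT' continuous_on_funpow[OF maps_into continuous]) auto
  then show ?thesis by auto
qed

lemma crossing_time_before_level:
  assumes "a < c1" "c1 \<le> c2" "c2 < b"
  obtains s :: nat where "0 < s"
    "\<And>x i j. x \<in> {a..b} \<Longrightarrow> i + s \<le> j \<Longrightarrow> (f ^^ j) x \<le> c2 \<Longrightarrow> (f ^^ i) x < c1"
proof -
  obtain T where T: "\<And>z j. z \<in> {c1..b} \<Longrightarrow> T \<le> j \<Longrightarrow> c2 < (f ^^ j) z"
    using crossing_time[OF assms] by blast
  show thesis
  proof (rule that[of "Suc T"])
    fix x i j assume x: "x \<in> {a..b}" "i + Suc T \<le> j" "(f ^^ j) x \<le> c2"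
    show "(f ^^ i) x < c1"
    proof (rule ccontr)
      assume "\<not> (f ^^ i) x < c1"
      then have "(f ^^ i) x \<in> {c1..b}"
        using funpow_in_interval[OF x(1), of i] by auto
      then have "c2 < (f ^^ Suc T) ((f ^^ i) x)"
        using T[of "(f ^^ i) x" "Suc T"] by simp
      also have "(f ^^ Suc T) ((f ^^ i) x) = (f ^^ (Suc T + i)) x"
        by (simp add: funpow_add)
      also have "\<dots> \<le> (f ^^ j) x"
        by (rule orbit_mono[OF x(1)]) (use x(2) in simp)
      finally show False
        using x(3) by simp
    qed
  qed simp
qed

lemma separated_level_points:
  assumes "a < c1" "c1 \<le> c2" "c2 < b"
  obtains s :: nat and x :: "nat \<Rightarrow> real" where "0 < s" "\<And>k. x k \<in> {a..b}"
    "\<And>r r'. r < r' \<Longrightarrow> c2 - c1 < \<bar>(f ^^ (s * r)) (x (s * r)) - (f ^^ (s * r)) (x (s * r'))\<bar>"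
proof -
  obtain s where s: "0 < s"
    "\<And>x i j. x \<in> {a..b} \<Longrightarrow> i + s \<le> j \<Longrightarrow> (f ^^ j) x \<le> c2 \<Longrightarrow> (f ^^ i) x < c1"
    using crossing_time_before_level[OF assms] by blast
  have "c2 \<in> {a..b}"
    using assms by simp
  then have "\<forall>k. \<exists>x. x \<in> {a..b} \<and> (f ^^ k) x = c2"
    using level_preimage by blast
  then obtain x where "\<forall>k. x k \<in> {a..b} \<and> (f ^^ k) (x k) = c2"
    by (rule choice[THEN exE])
  then have x: "\<And>k. x k \<in> {a..b}" "\<And>k. (f ^^ k) (x k) = c2"
    by simp_all
  have "c2 - c1 < \<bar>(f ^^ (s * r)) (x (s * r)) - (f ^^ (s * r)) (x (s * r'))\<bar>" if "r < r'" for r r'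
  proof -
    have "s * r + s \<le> s * r'"
      using that by (metis Suc_leI add.commute mult_Suc_right mult_le_mono2)
    then have "(f ^^ (s * r)) (x (s * r')) < c1"
      using s(2) x by simp
    then show ?thesis
      using x(2)[of "s * r"] by simp
  qed
  with s(1) x(1) show thesis
    using that by blast
qed

lemma cover_num_linear_lower:
  obtains \<epsilon>0 s where "0 < \<epsilon>0" "0 < s"
    "\<And>e n. 0 < e \<Longrightarrow> e \<le> \<epsilon>0 \<Longrightarrow> real n \<le> real s * real (cover_num {a..b} f n e)"
proof -
  define c1 c2 where "c1 = a + (b - a) / 3" and "c2 = a + 2 * (b - a) / 3"
  have c: "a < c1" "c1 < c2" "c2 < b"
    unfolding c1_def c2_def using a_less_b by (auto simp: field_simps)
  obtain s x where s: "0 < s" and x: "\<And>k. x k \<in> {a..b}" and sep: "\<And>r r'. r < r'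
    \<Longrightarrow> c2 - c1 < \<bar>(f ^^ (s * r)) (x (s * r)) - (f ^^ (s * r)) (x (s * r'))\<bar>"
    using separated_level_points[OF c(1) less_imp_le[OF c(2)] c(3)] by blast
  have "real n \<le> real s * real (cover_num {a..b} f n e)"
    if e: "0 < e" "e \<le> (c2 - c1) / 2" for e n
  proof (cases "n = 0")
    case False
    define R where "R = (n - 1) div s"
    obtain N where "\<And>n. \<exists>C. dyn_cover {a..b} f n e C \<and> card C \<le> N * n + 1"
      using dyn_cover_linear_size[OF e(1)] by blast
    then obtain C0 where C0: "dyn_cover {a..b} f n e C0"
      by blast
    have "\<exists>k<n. 2 * e \<le> \<bar>(f ^^ k) (x (s * r)) - (f ^^ k) (x (s * r'))\<bar>"
      if "r \<in> {..R}" "r' \<in> {..R}" "r \<noteq> r'" for r r'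
    proof (cases "r < r'")
      case True
      then show ?thesis
        using sep[OF True] mult_less_of_le_div_pred[of n r s] False that(1) e(2) unfolding R_def
        by (intro exI[of _ "s * r"]) auto
    next
      case False
      then have "r' < r"
        using that(3) by simp
      then show ?thesis
        using sep[of r' r] mult_less_of_le_div_pred[of n r' s] \<open>n \<noteq> 0\<close> that(2) e(2) unfolding R_def
        by (intro exI[of _ "s * r'"]) (auto simp: abs_minus_commute)
    qed
    then have "card {..R} \<le> cover_num {a..b} f n e"
      using x by (intro card_le_cover_num_of_separated[OF e(1) C0, of "\<lambda>r. x (s * r)"]) auto
    moreover have "n \<le> s * (R + 1)"
      unfolding R_def using s False by (intro le_mult_Suc_div_pred) auto
    ultimately have "n \<le> s * cover_num {a..b} f n e"
      using mult_le_mono2[of "R + 1" "cover_num {a..b} f n e" s] by simp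
    then show ?thesis
      by (metis of_nat_le_iff of_nat_mult)
  qed simp
  then show thesis
    using that[of "(c2 - c1) / 2" s] c s by simp
qed

lemma pol_growth_eventually_one:
  obtains \<epsilon>0 where "0 < \<epsilon>0" "\<And>e. 0 < e \<Longrightarrow> e \<le> \<epsilon>0 \<Longrightarrow> pol_growth {a..b} f e = 1"
proof -
  obtain \<epsilon>0 s where \<epsilon>0: "0 < \<epsilon>0" and s: "0 < s"
    and lower: "\<And>e n. 0 < e \<Longrightarrow> e \<le> \<epsilon>0 \<Longrightarrow> real n \<le> real s * real (cover_num {a..b} f n e)"
    by (rule cover_num_linear_lower) blast
  have "pol_growth {a..b} f e = 1" if e: "0 < e" "e \<le> \<epsilon>0" for e
  proof -
    obtain N where N: "\<And>n. \<exists>C. dyn_cover {a..b} f n e C \<and> card C \<le> N * n + 1"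
      using dyn_cover_linear_size[OF e(1)] by blast
    have upper: "cover_num {a..b} f n e \<le> N * n + 1" for n
      using N[of n] cover_num_le_card le_trans by blast
    have "eventually (\<lambda>n. 1 / real s * real n \<le> real (cover_num {a..b} f n e)
      \<and> real (cover_num {a..b} f n e) \<le> real (N + 1) * real n) sequentially"
      using eventually_ge_at_top[of 1]
    proof eventually_elim
      case (elim n)
      have "cover_num {a..b} f n e \<le> (N + 1) * n"
        using upper[of n] elim by simp
      then have "real (cover_num {a..b} f n e) \<le> real (N + 1) * real n"
        by (metis of_nat_le_iff of_nat_mult)
      moreover have "1 / real s * real n \<le> real (cover_num {a..b} f n e)"
        using lower[OF e, of n] s by (simp add: field_simps)
      ultimately show ?case by simp
    qed
    then show ?thesis
      by (rule pol_growth_eq_one_of_linear_bounds[rotated]) (use s in simp)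
  qed
  then show thesis
    using that \<epsilon>0 by blast
qed

end

lemma upward_map_reflect:
  assumes "a < b" "f ` {a..b} \<subseteq> {a..b}" "continuous_on {a..b} f" "f a = a" "f b = b"
    and below_diagonal: "\<And>x. x \<in> {a<..<b} \<Longrightarrow> f x < x"
  shows "upward_map a b (\<lambda>x. (a + b) - f ((a + b) - x))"
proof
  have reflect: "(a + b) - x \<in> {a..b}" if "x \<in> {a..b}" for x
    using that by auto
  show "(\<lambda>x. (a + b) - f ((a + b) - x)) ` {a..b} \<subseteq> {a..b}"
  proof clarify
    fix x assume "x \<in> {a..b}"
    then have "f ((a + b) - x) \<in> {a..b}"
      using assms(2) reflect by blast
    then show "(a + b) - f ((a + b) - x) \<in> {a..b}"
      by auto
  qed
  show "continuous_on {a..b} (\<lambda>x. (a + b) - f ((a + b) - x))"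
    by (intro continuous_intros continuous_on_compose2[OF assms(3)]) (use reflect in auto)
  fix x assume "x \<in> {a<..<b}"
  then have "f ((a + b) - x) < (a + b) - x"
    by (intro below_diagonal) auto
  then show "x < (a + b) - f ((a + b) - x)"
    by simp
qed (use assms in auto)

lemma continuous_on_nonzero_sign:
  fixes g :: "'a::topological_space \<Rightarrow> real"
  assumes "connected S" "continuous_on S g" "\<And>x. x \<in> S \<Longrightarrow> g x \<noteq> 0"
  shows "(\<forall>x\<in>S. 0 < g x) \<or> (\<forall>x\<in>S. g x < 0)"
proof (rule ccontr)
  assume "\<not> ?thesis"
  then obtain u v where uv: "u \<in> S" "v \<in> S" "\<not> 0 < g u" "\<not> g v < 0"
    by blast
  with assms(3) have "g u < 0" "0 < g v"
    by (metis linorder_neqE_linordered_idom)+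
  then have "0 \<in> g ` S"
    using uv connected_contains_Icc[OF connected_continuous_image[OF assms(2,1)], of "g u" "g v"] by auto
  then show False using assms(3) by auto
qed

lemma pol_growth_eventually_one_if_no_interior_fixpoint:
  fixes a b :: real and f :: "real \<Rightarrow> real"
  assumes "a < b" "f ` {a..b} \<subseteq> {a..b}" "continuous_on {a..b} f" "f a = a" "f b = b"
    and "\<And>x. x \<in> {a<..<b} \<Longrightarrow> f x \<noteq> x"
  obtains \<epsilon>0 where "0 < \<epsilon>0" "\<And>e. 0 < e \<Longrightarrow> e \<le> \<epsilon>0 \<Longrightarrow> pol_growth {a..b} f e = 1"
proof -
  have "(\<forall>x\<in>{a<..<b}. 0 < f x - x) \<or> (\<forall>x\<in>{a<..<b}. f x - x < 0)"
    using assms(6)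
    by (intro continuous_on_nonzero_sign continuous_intros continuous_on_subset[OF assms(3)]) auto
  then show thesis
  proof
    assume "\<forall>x\<in>{a<..<b}. 0 < f x - x"
    then have "upward_map a b f"
      using assms by unfold_locales auto
    then show thesis
      using upward_map.pol_growth_eventually_one that by blast
  next
    assume "\<forall>x\<in>{a<..<b}. f x - x < 0"
    then have "upward_map a b (\<lambda>x. (a + b) - f ((a + b) - x))"
      using assms by (intro upward_map_reflect) auto
    moreover have "pol_growth {a..b} (\<lambda>x. (a + b) - f ((a + b) - x)) = pol_growth {a..b} f"
      by (rule pol_growth_reflect) auto
    ultimately show thesis
      using upward_map.pol_growth_eventually_one that by metis
  qed
qed

theorem lemma3p2:
  fixes a b :: real and f :: "real \<Rightarrow> real"
  assumes "a < b"
    and "f ` {a..b} \<subseteq> {a..b}"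
    and "continuous_on {a..b} f"
    and "mono_on {a..b} f"
    and "f a = a" and "f b = b"
    and "\<And>x. x \<in> {a<..<b} \<Longrightarrow> f x \<noteq> x"
  shows "(pol_growth {a..b} f \<longlongrightarrow> ereal 1) (at_right 0) \<and> hpol {a..b} f = 1"
proof -
  obtain \<epsilon>0 where "0 < \<epsilon>0" "\<And>e. 0 < e \<Longrightarrow> e \<le> \<epsilon>0 \<Longrightarrow> pol_growth {a..b} f e = 1"
    using pol_growth_eventually_one_if_no_interior_fixpoint[OF assms(1-3,5-7)] by blast
  then have "eventually (\<lambda>e. pol_growth {a..b} f e = 1) (at_right 0)"
    unfolding eventually_at_right_field by (intro exI[of _ \<epsilon>0]) auto
  then have lim: "(pol_growth {a..b} f \<longlongrightarrow> 1) (at_right 0)"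
    by (rule tendsto_eventually)
  then have "hpol {a..b} f = 1"
    unfolding hpol_def by (rule tendsto_Lim[OF trivial_limit_at_right_real])
  with lim show ?thesis
    by (simp add: one_ereal_def)
qed

end
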